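(* Let $G$ be a finite group and $X$ a finite $G$-poset. Let $\alpha:X'/G\to(X/G)'$ be defined by $\alpha(\overline{(x_0<x_1<\dots<x_n)})=(\overline{x_0}<\overline{x_1}<\dots<\overline{x_n})$. Then $\alpha$ is injective if and only if $X$ satisfies property (B). Moreover, if $\alpha$ is injective then it is an isomorphism of posets.
   Context: A finite $G$-poset is a finite poset with a right action of $G$ by order-preserving maps. $X'$ denotes the poset of non-empty chains of $X$ ordered by inclusion, with $G$ acting componentwise. For a $G$-poset $Y$, $Y/G$ is the orbit poset: $\overline{y}\le\overline{z}$ iff there exist representatives $y_1\le z_1$. $X$ satisfies property (B) if the simplicial complex $\mathcal{K}(X)$ of non-empty chains of $X$ does, i.e. whenever $\{v_0,\dots,v_n\}$ and $\{v_0^{g_0},\dots,v_n^{g_n}\}$ are both chains of $X$ with $g_i\in G$, there exists $g\in G$ with $v_i^{g_i}=v_i^g$ for all $i$. *)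

theory Defs
  imports "HOL-Algebra.Group"
begin

definition finite_G_poset ::
  "('g, 'b) monoid_scheme \<Rightarrow> 'a set \<Rightarrow> ('a \<Rightarrow> 'a \<Rightarrow> bool) \<Rightarrow> ('a \<Rightarrow> 'g \<Rightarrow> 'a) \<Rightarrow> bool" where
  "finite_G_poset G X leq act \<longleftrightarrow>
     group G \<and> finite (carrier G) \<and> finite X \<and>
     (\<forall>x\<in>X. leq x x) \<and>
     (\<forall>x\<in>X. \<forall>y\<in>X. leq x y \<and> leq y x \<longrightarrow> x = y) \<and>
     (\<forall>x\<in>X. \<forall>y\<in>X. \<forall>z\<in>X. leq x y \<and> leq y z \<longrightarrow> leq x z) \<and>
     (\<forall>x\<in>X. \<forall>g\<in>carrier G. act x g \<in> X) \<and>
     (\<forall>x\<in>X. act x \<one>\<^bsub>G\<^esub> = x) \<and>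
     (\<forall>x\<in>X. \<forall>g\<in>carrier G. \<forall>h\<in>carrier G. act (act x g) h = act x (g \<otimes>\<^bsub>G\<^esub> h)) \<and>
     (\<forall>x\<in>X. \<forall>y\<in>X. \<forall>g\<in>carrier G. leq x y \<longrightarrow> leq (act x g) (act y g))"

text \<open>Non-empty chains of a poset (A, r), i.e. the poset A' (ordered by inclusion).\<close>
definition chains_of :: "'c set \<Rightarrow> ('c \<Rightarrow> 'c \<Rightarrow> bool) \<Rightarrow> 'c set set" where
  "chains_of A r = {c. c \<noteq> {} \<and> c \<subseteq> A \<and> (\<forall>x\<in>c. \<forall>y\<in>c. r x y \<or> r y x)}"

definition orbit :: "('g, 'b) monoid_scheme \<Rightarrow> ('a \<Rightarrow> 'g \<Rightarrow> 'a) \<Rightarrow> 'a \<Rightarrow> 'a set" where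
  "orbit G act x = {act x g | g. g \<in> carrier G}"

definition orbit_poset :: "('g, 'b) monoid_scheme \<Rightarrow> 'a set \<Rightarrow> ('a \<Rightarrow> 'g \<Rightarrow> 'a) \<Rightarrow> 'a set set" where
  "orbit_poset G X act = orbit G act ` X"

definition orbit_le :: "('a \<Rightarrow> 'a \<Rightarrow> bool) \<Rightarrow> 'a set \<Rightarrow> 'a set \<Rightarrow> bool" where
  "orbit_le leq A B \<longleftrightarrow> (\<exists>a\<in>A. \<exists>b\<in>B. leq a b)"

definition chain_orbit :: "('g, 'b) monoid_scheme \<Rightarrow> ('a \<Rightarrow> 'g \<Rightarrow> 'a) \<Rightarrow> 'a set \<Rightarrow> 'a set set" where
  "chain_orbit G act c = {(\<lambda>x. act x g) ` c | g. g \<in> carrier G}"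

definition chain_orbit_poset ::
  "('g, 'b) monoid_scheme \<Rightarrow> 'a set \<Rightarrow> ('a \<Rightarrow> 'a \<Rightarrow> bool) \<Rightarrow> ('a \<Rightarrow> 'g \<Rightarrow> 'a) \<Rightarrow> 'a set set set" where
  "chain_orbit_poset G X leq act = chain_orbit G act ` chains_of X leq"

definition chain_orbit_le :: "'a set set \<Rightarrow> 'a set set \<Rightarrow> bool" where
  "chain_orbit_le Q1 Q2 \<longleftrightarrow> (\<exists>c1\<in>Q1. \<exists>c2\<in>Q2. c1 \<subseteq> c2)"

definition alpha :: "('g, 'b) monoid_scheme \<Rightarrow> ('a \<Rightarrow> 'g \<Rightarrow> 'a) \<Rightarrow> 'a set set \<Rightarrow> 'a set set" where
  "alpha G act Q = orbit G act ` (SOME c. c \<in> Q)"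

definition property_B ::
  "('g, 'b) monoid_scheme \<Rightarrow> 'a set \<Rightarrow> ('a \<Rightarrow> 'a \<Rightarrow> bool) \<Rightarrow> ('a \<Rightarrow> 'g \<Rightarrow> 'a) \<Rightarrow> bool" where
  "property_B G X leq act \<longleftrightarrow>
     (\<forall>c f. c \<in> chains_of X leq \<longrightarrow> (\<forall>v\<in>c. f v \<in> carrier G) \<longrightarrow>
        (\<lambda>v. act v (f v)) ` c \<in> chains_of X leq \<longrightarrow>
        (\<exists>g\<in>carrier G. \<forall>v\<in>c. act v (f v) = act v g))"

end

theory Submission
  imports Defs "HOL-Algebra.Multiplicative_Group"
begin

(*
  No element is strictly comparable with a translate of itself: if x <= x^g, then
  applying the monotone map (-)^g repeatedly gives x <= x^g <= ... <= x^(g^|G|) = x,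
  hence x^g = x. So the elements of a chain lie in pairwise distinct orbits, and two
  chains c, d with the same image in X/G are matched by a bijection v |-> v^(f v).
  Property (B) says exactly that every such bijection is induced by a single group
  element, i.e. that c and d lie in the same G-orbit of X'; this is the injectivity
  of alpha, and the same transport argument shows that alpha reflects the order.

  Surjectivity of alpha does not need (B): a chain of X/G lifts to a chain of X by
  induction, lifting the orbits below its greatest one and then translating a
  representative of the greatest orbit above the top of the lifted chain.
*)

lemma finite_total_trans_has_greatest:
  assumes "finite A" "A \<noteq> {}"
    and "\<forall>a\<in>A. \<forall>b\<in>A. r a b \<or> r b a"
    and "\<forall>a\<in>A. \<forall>b\<in>A. \<forall>c\<in>A. r a b \<and> r b c \<longrightarrow> r a c"
  shows "\<exists>m\<in>A. \<forall>a\<in>A. r a m"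
  using assms
proof (induction A rule: finite_ne_induct)
  case (singleton x)
  then show ?case by blast
next
  case (insert x F)
  obtain m where m: "m \<in> F" "\<forall>a\<in>F. r a m"
    using insert.IH insert.prems by blast
  show ?case
  proof (cases "r m x")
    case True
    then have "\<forall>a\<in>insert x F. r a x"
      using m insert.prems by blast
    then show ?thesis by blast
  next
    case False
    then have "\<forall>a\<in>insert x F. r a m"
      using m insert.prems(1) by blast
    with m show ?thesis by blast
  qed
qed

lemma chains_of_subset: "c \<in> chains_of A r \<Longrightarrow> c \<subseteq> A"
  unfolding chains_of_def by blast

lemma chains_of_total: "c \<in> chains_of A r \<Longrightarrow> x \<in> c \<Longrightarrow> y \<in> c \<Longrightarrow> r x y \<or> r y x"
  unfolding chains_of_def by blast

lemma chains_of_mono: "c \<in> chains_of A r \<Longrightarrow> d \<subseteq> c \<Longrightarrow> d \<noteq> {} \<Longrightarrow> d \<in> chains_of A r"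
  unfolding chains_of_def by blast

locale G_poset = group G for G :: "('g, 'b) monoid_scheme" (structure) +
  fixes X :: "'a set" and leq :: "'a \<Rightarrow> 'a \<Rightarrow> bool" and act :: "'a \<Rightarrow> 'g \<Rightarrow> 'a"
  assumes poset_refl: "x \<in> X \<Longrightarrow> leq x x"
    and poset_antisym: "x \<in> X \<Longrightarrow> y \<in> X \<Longrightarrow> leq x y \<Longrightarrow> leq y x \<Longrightarrow> x = y"
    and poset_trans: "x \<in> X \<Longrightarrow> y \<in> X \<Longrightarrow> z \<in> X \<Longrightarrow> leq x y \<Longrightarrow> leq y z \<Longrightarrow> leq x z"
    and act_closed: "x \<in> X \<Longrightarrow> g \<in> carrier G \<Longrightarrow> act x g \<in> X"
    and act_one: "x \<in> X \<Longrightarrow> act x \<one> = x"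
    and act_mult: "x \<in> X \<Longrightarrow> g \<in> carrier G \<Longrightarrow> h \<in> carrier G \<Longrightarrow> act (act x g) h = act x (g \<otimes> h)"
    and act_mono: "x \<in> X \<Longrightarrow> y \<in> X \<Longrightarrow> g \<in> carrier G \<Longrightarrow> leq x y \<Longrightarrow> leq (act x g) (act y g)"

lemma G_poset_if_finite_G_poset: "finite_G_poset G X leq act \<Longrightarrow> G_poset G X leq act"
  unfolding finite_G_poset_def G_poset_def G_poset_axioms_def by blast

context G_poset
begin

lemma act_inv: "x \<in> X \<Longrightarrow> g \<in> carrier G \<Longrightarrow> act (act x g) (inv g) = x"
  by (simp add: act_mult act_one)

lemma act_in_orbit: "g \<in> carrier G \<Longrightarrow> act x g \<in> orbit G act x"
  unfolding orbit_def by blast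

lemma orbitE:
  assumes "y \<in> orbit G act x"
  obtains g where "g \<in> carrier G" "y = act x g"
  using assms unfolding orbit_def by blast

lemma self_in_orbit: "x \<in> X \<Longrightarrow> x \<in> orbit G act x"
  using act_in_orbit[of \<one> x] by (simp add: act_one)

lemma orbit_subset: "x \<in> X \<Longrightarrow> orbit G act x \<subseteq> X"
  by (auto elim: orbitE simp: act_closed)

lemma orbit_act:
  assumes "x \<in> X" "g \<in> carrier G"
  shows "orbit G act (act x g) = orbit G act x"
proof
  show "orbit G act (act x g) \<subseteq> orbit G act x"
    using assms by (auto elim!: orbitE simp: act_mult intro!: act_in_orbit)
  show "orbit G act x \<subseteq> orbit G act (act x g)"
  proof
    fix y assume "y \<in> orbit G act x"
    then obtain h where h: "h \<in> carrier G" "y = act x h" by (rule orbitE)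
    then have "y = act (act x g) (inv g \<otimes> h)"
      using assms by (simp add: act_mult m_assoc[symmetric])
    then show "y \<in> orbit G act (act x g)"
      using h assms by (simp add: act_in_orbit)
  qed
qed

lemma orbit_eq: "x \<in> X \<Longrightarrow> y \<in> orbit G act x \<Longrightarrow> orbit G act y = orbit G act x"
  by (auto elim: orbitE simp: orbit_act)

lemma orbit_le_orbit_iff:
  assumes "x \<in> X" "y \<in> X"
  shows "orbit_le leq (orbit G act x) (orbit G act y) \<longleftrightarrow> (\<exists>z\<in>orbit G act y. leq x z)"
proof
  assume "orbit_le leq (orbit G act x) (orbit G act y)"
  then obtain a b where ab: "a \<in> orbit G act x" "b \<in> orbit G act y" "leq a b"
    unfolding orbit_le_def by blast
  obtain g where g: "g \<in> carrier G" "a = act x g" using ab(1) by (rule orbitE)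
  have "b \<in> X" using ab(2) orbit_subset assms(2) by blast
  then have "leq x (act b (inv g))"
    using act_mono[of a b "inv g"] ab(3) g assms(1) by (simp add: act_closed act_inv)
  moreover have "act b (inv g) \<in> orbit G act y"
    using orbit_eq[OF assms(2) ab(2)] act_in_orbit[of "inv g" b] g(1) by simp
  ultimately show "\<exists>z\<in>orbit G act y. leq x z" by blast
next
  assume "\<exists>z\<in>orbit G act y. leq x z"
  then show "orbit_le leq (orbit G act x) (orbit G act y)"
    unfolding orbit_le_def using self_in_orbit[OF assms(1)] by blast
qed

lemma orbit_le_trans:
  assumes "A \<in> orbit_poset G X act" "B \<in> orbit_poset G X act" "C \<in> orbit_poset G X act"
    and "orbit_le leq A B" "orbit_le leq B C"
  shows "orbit_le leq A C"
proof -
  obtain a b c where abc: "a \<in> X" "b \<in> X" "c \<in> X"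
    and eqs: "A = orbit G act a" "B = orbit G act b" "C = orbit G act c"
    using assms(1-3) unfolding orbit_poset_def by blast
  obtain b' where b': "b' \<in> orbit G act b" "leq a b'"
    using assms(4) orbit_le_orbit_iff abc eqs by blast
  obtain c' where c': "c' \<in> orbit G act c" "leq b c'"
    using assms(5) orbit_le_orbit_iff abc eqs by blast
  obtain g where g: "g \<in> carrier G" "b' = act b g" using b'(1) by (rule orbitE)
  have "c' \<in> X" using c'(1) orbit_subset abc(3) by blast
  then have "leq a (act c' g)"
    using poset_trans act_mono[OF abc(2) _ g(1) c'(2)] b'(2) g abc by (metis act_closed)
  moreover have "act c' g \<in> orbit G act c"
    using orbit_eq[OF abc(3) c'(1)] act_in_orbit[OF g(1)] by blast
  ultimately show ?thesis
    using orbit_le_orbit_iff abc eqs by blast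
qed

lemma act_eq_if_le_act:
  assumes "finite (carrier G)" "x \<in> X" "g \<in> carrier G" "leq x (act x g)"
  shows "act x g = x"
proof -
  have pow_closed: "act x (g [^] k) \<in> X" for k :: nat
    using assms(2,3) by (simp add: act_closed)
  have le_pow: "leq x (act x (g [^] k))" for k :: nat
  proof (induction k)
    case 0
    show ?case using assms(2) by (simp add: act_one poset_refl)
  next
    case (Suc k)
    have "leq (act x g) (act x (g [^] Suc k))"
      using act_mono[OF assms(2) pow_closed assms(3) Suc] assms(2,3) by (simp add: act_mult)
    then show ?case
      using poset_trans[OF assms(2) act_closed[OF assms(2,3)] pow_closed assms(4)] by blast
  qed
  obtain n where n: "order G = Suc n"
    using assms(1) order_gt_0_iff_finite gr0_conv_Suc by blast
  have "leq (act x g) (act x (g [^] order G))"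
    using act_mono[OF assms(2) pow_closed assms(3) le_pow[of n]] assms(2,3) n by (simp add: act_mult)
  then have "leq (act x g) x"
    using pow_order_eq_1[OF assms(3)] assms(2) by (simp add: act_one)
  then show ?thesis
    using poset_antisym[OF act_closed[OF assms(2,3)] assms(2)] assms(4) by blast
qed

lemma act_eq_if_comparable:
  assumes "finite (carrier G)" "x \<in> X" "g \<in> carrier G" "leq x (act x g) \<or> leq (act x g) x"
  shows "act x g = x"
  using assms(4)
proof
  assume "leq (act x g) x"
  then have "leq (act x g) (act (act x g) (inv g))"
    by (simp add: act_inv assms(2,3))
  then have "act (act x g) (inv g) = act x g"
    by (rule act_eq_if_le_act[OF assms(1) act_closed[OF assms(2,3)] inv_closed[OF assms(3)]])
  then show ?thesis
    by (simp add: act_inv assms(2,3))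
qed (rule act_eq_if_le_act[OF assms(1-3)])

lemma inj_on_orbit_chain:
  assumes "finite (carrier G)" "c \<in> chains_of X leq"
  shows "inj_on (orbit G act) c"
proof (rule inj_onI)
  fix v w assume vw: "v \<in> c" "w \<in> c" "orbit G act v = orbit G act w"
  have X: "v \<in> X" "w \<in> X"
    using vw(1,2) chains_of_subset[OF assms(2)] by auto
  then have "w \<in> orbit G act v"
    using vw(3) self_in_orbit by simp
  then obtain g where g: "g \<in> carrier G" "w = act v g" by (rule orbitE)
  have "leq v w \<or> leq w v"
    using chains_of_total[OF assms(2) vw(1,2)] .
  then have "act v g = v"
    using act_eq_if_comparable[OF assms(1) X(1) g(1)] g(2) by simp
  with g(2) show "v = w" by simp
qed

lemma orbit_image_act:
  assumes "c \<subseteq> X" "\<And>v. v \<in> c \<Longrightarrow> f v \<in> carrier G"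
  shows "orbit G act ` (\<lambda>v. act v (f v)) ` c = orbit G act ` c"
  unfolding image_image using assms by (auto intro!: image_cong simp: orbit_act)

lemma image_act_image_act:
  assumes "c \<subseteq> X" "g \<in> carrier G" "h \<in> carrier G"
  shows "(\<lambda>x. act x h) ` (\<lambda>x. act x g) ` c = (\<lambda>x. act x (g \<otimes> h)) ` c"
  unfolding image_image using assms by (auto intro!: image_cong simp: act_mult)

lemma self_in_chain_orbit:
  assumes "c \<subseteq> X"
  shows "c \<in> chain_orbit G act c"
proof -
  have "c = (\<lambda>x. act x \<one>) ` c"
    using assms by (simp add: act_one subset_iff)
  then show ?thesis
    unfolding chain_orbit_def using one_closed by blast
qed

lemma chain_orbit_act:
  assumes "c \<subseteq> X" "g \<in> carrier G"
  shows "chain_orbit G act ((\<lambda>x. act x g) ` c) = chain_orbit G act c"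
proof
  show "chain_orbit G act ((\<lambda>x. act x g) ` c) \<subseteq> chain_orbit G act c"
  proof
    fix d assume "d \<in> chain_orbit G act ((\<lambda>x. act x g) ` c)"
    then obtain h where h: "h \<in> carrier G" "d = (\<lambda>x. act x h) ` (\<lambda>x. act x g) ` c"
      unfolding chain_orbit_def by blast
    then have "d = (\<lambda>x. act x (g \<otimes> h)) ` c"
      using assms by (simp add: image_act_image_act)
    then show "d \<in> chain_orbit G act c"
      unfolding chain_orbit_def using assms(2) h(1) by blast
  qed
  have "(\<lambda>x. act x h) ` c = (\<lambda>x. act x (inv g \<otimes> h)) ` (\<lambda>x. act x g) ` c"
    if "h \<in> carrier G" for h
  proof -
    have "g \<otimes> (inv g \<otimes> h) = h"
      using inv_solve_left[of "inv g \<otimes> h" g h] assms(2) that by simp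
    then show ?thesis
      using assms that by (simp add: image_act_image_act)
  qed
  then show "chain_orbit G act c \<subseteq> chain_orbit G act ((\<lambda>x. act x g) ` c)"
    unfolding chain_orbit_def using assms(2) by blast
qed

lemma alpha_chain_orbit:
  assumes "c \<subseteq> X"
  shows "alpha G act (chain_orbit G act c) = orbit G act ` c"
proof -
  have "(SOME d. d \<in> chain_orbit G act c) \<in> chain_orbit G act c"
    using self_in_chain_orbit[OF assms] by (rule someI)
  then obtain g where "g \<in> carrier G" "(SOME d. d \<in> chain_orbit G act c) = (\<lambda>x. act x g) ` c"
    unfolding chain_orbit_def by blast
  then show ?thesis
    unfolding alpha_def using orbit_image_act[OF assms, of "\<lambda>_. g"] by simp
qed

lemma property_B_transport:
  assumes "property_B G X leq act" "c \<in> chains_of X leq" "d \<in> chains_of X leq"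
    and "orbit G act ` c \<subseteq> orbit G act ` d"
  obtains g where "g \<in> carrier G" "(\<lambda>x. act x g) ` c \<subseteq> d"
proof -
  have "\<forall>v\<in>c. \<exists>g. g \<in> carrier G \<and> act v g \<in> d"
  proof
    fix v assume "v \<in> c"
    then obtain w where w: "w \<in> d" "orbit G act v = orbit G act w"
      using assms(4) by blast
    then have "w \<in> orbit G act v"
      using self_in_orbit chains_of_subset[OF assms(3)] by auto
    with w(1) show "\<exists>g. g \<in> carrier G \<and> act v g \<in> d"
      by (auto elim: orbitE)
  qed
  then obtain f where f: "\<forall>v\<in>c. f v \<in> carrier G \<and> act v (f v) \<in> d"
    by (rule bchoice[THEN exE])
  have "c \<noteq> {}"
    using assms(2) unfolding chains_of_def by blast
  moreover have "(\<lambda>v. act v (f v)) ` c \<subseteq> d"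
    using f by blast
  ultimately have "(\<lambda>v. act v (f v)) ` c \<in> chains_of X leq"
    using chains_of_mono[OF assms(3)] by blast
  then obtain g where g: "g \<in> carrier G" "\<forall>v\<in>c. act v (f v) = act v g"
    using assms(1)[unfolded property_B_def, rule_format, of c f] assms(2) f by blast
  then have "(\<lambda>x. act x g) ` c \<subseteq> d"
    using f by auto
  with g(1) show ?thesis by (rule that)
qed

lemma upper_bound_in_orbit:
  assumes "finite c" "c \<subseteq> X" "\<forall>x\<in>c. \<forall>y\<in>c. leq x y \<or> leq y x" "y \<in> X"
    and "\<forall>x\<in>c. orbit_le leq (orbit G act x) (orbit G act y)"
  shows "\<exists>z\<in>orbit G act y. \<forall>x\<in>c. leq x z"
proof (cases "c = {}")
  case True
  then show ?thesis using self_in_orbit[OF assms(4)] by blast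
next
  case False
  have "\<forall>a\<in>c. \<forall>b\<in>c. \<forall>d\<in>c. leq a b \<and> leq b d \<longrightarrow> leq a d"
    using poset_trans assms(2) by blast
  then obtain m where m: "m \<in> c" "\<forall>x\<in>c. leq x m"
    using finite_total_trans_has_greatest[OF assms(1) False assms(3)] by blast
  then obtain z where z: "z \<in> orbit G act y" "leq m z"
    using assms(2,4,5) orbit_le_orbit_iff by blast
  have "z \<in> X" using z(1) orbit_subset[OF assms(4)] by blast
  then have "\<forall>x\<in>c. leq x z"
    using m z(2) assms(2) poset_trans by blast
  with z(1) show ?thesis by blast
qed

lemma lift_total_set_of_orbits:
  assumes "finite X" "S \<subseteq> orbit_poset G X act"
    and "\<forall>A\<in>S. \<forall>B\<in>S. orbit_le leq A B \<or> orbit_le leq B A"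
  shows "\<exists>c\<subseteq>X. (\<forall>x\<in>c. \<forall>y\<in>c. leq x y \<or> leq y x) \<and> orbit G act ` c = S"
proof -
  have "finite (orbit_poset G X act)"
    unfolding orbit_poset_def using assms(1) by (rule finite_imageI)
  then have "finite S"
    using assms(2) by (rule rev_finite_subset)
  then show ?thesis
    using assms(2,3)
  proof (induction S rule: finite_remove_induct)
    case empty
    show ?case by blast
  next
    case (remove S)
    have "\<forall>A\<in>S. \<forall>B\<in>S. \<forall>C\<in>S. orbit_le leq A B \<and> orbit_le leq B C \<longrightarrow> orbit_le leq A C"
    proof (intro ballI impI)
      fix A B C assume "A \<in> S" "B \<in> S" "C \<in> S" "orbit_le leq A B \<and> orbit_le leq B C"
      with remove.prems(1) show "orbit_le leq A C"
        using orbit_le_trans[of A B C] by blast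
    qed
    then obtain T where T: "T \<in> S" "\<forall>A\<in>S. orbit_le leq A T"
      using finite_total_trans_has_greatest[OF remove.hyps(1,2) remove.prems(2)] by blast
    have "S - {T} \<subseteq> orbit_poset G X act"
      "\<forall>A\<in>S - {T}. \<forall>B\<in>S - {T}. orbit_le leq A B \<or> orbit_le leq B A"
      using remove.prems by auto
    then obtain c where c: "c \<subseteq> X" "\<forall>x\<in>c. \<forall>y\<in>c. leq x y \<or> leq y x" "orbit G act ` c = S - {T}"
      using remove.IH[OF T(1)] by blast
    obtain y where y: "y \<in> X" "T = orbit G act y"
      using T(1) remove.prems(1) unfolding orbit_poset_def by blast
    have "finite c"
      using assms(1) c(1) by (rule rev_finite_subset)
    moreover have "\<forall>x\<in>c. orbit_le leq (orbit G act x) (orbit G act y)"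
      using T(2) c(3) y(2) by blast
    ultimately obtain z where z: "z \<in> orbit G act y" "\<forall>x\<in>c. leq x z"
      using upper_bound_in_orbit[OF _ c(1,2) y(1)] by blast
    have "z \<in> X"
      using z(1) orbit_subset[OF y(1)] by blast
    have "orbit G act z = T"
      using orbit_eq[OF y(1) z(1)] y(2) by simp
    then have "orbit G act ` insert z c = S"
      using c(3) T(1) by blast
    moreover have "insert z c \<subseteq> X"
      using c(1) \<open>z \<in> X\<close> by blast
    moreover have "\<forall>x\<in>insert z c. \<forall>y\<in>insert z c. leq x y \<or> leq y x"
      using c(2) z(2) poset_refl[OF \<open>z \<in> X\<close>] by blast
    ultimately show ?case by blast
  qed
qed

lemma lift_chain_of_orbits:
  assumes "finite X" "S \<in> chains_of (orbit_poset G X act) (orbit_le leq)"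
  shows "\<exists>c\<in>chains_of X leq. orbit G act ` c = S"
proof -
  have "S \<subseteq> orbit_poset G X act" "S \<noteq> {}"
    and "\<forall>A\<in>S. \<forall>B\<in>S. orbit_le leq A B \<or> orbit_le leq B A"
    using assms(2) unfolding chains_of_def by auto
  then obtain c where c: "c \<subseteq> X" "\<forall>x\<in>c. \<forall>y\<in>c. leq x y \<or> leq y x" "orbit G act ` c = S"
    using lift_total_set_of_orbits[OF assms(1)] by meson
  with \<open>S \<noteq> {}\<close> have "c \<in> chains_of X leq"
    unfolding chains_of_def by blast
  with c(3) show ?thesis by blast
qed

lemma orbit_image_chain:
  assumes "c \<in> chains_of X leq"
  shows "orbit G act ` c \<in> chains_of (orbit_poset G X act) (orbit_le leq)"
  unfolding chains_of_def
proof (intro CollectI conjI ballI)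
  show "orbit G act ` c \<noteq> {}"
    using assms unfolding chains_of_def by blast
  show "orbit G act ` c \<subseteq> orbit_poset G X act"
    unfolding orbit_poset_def using chains_of_subset[OF assms] by (rule image_mono)
  fix A B assume "A \<in> orbit G act ` c" "B \<in> orbit G act ` c"
  then obtain x y where xy: "x \<in> c" "y \<in> c" "A = orbit G act x" "B = orbit G act y"
    by blast
  then have "x \<in> A" "y \<in> B"
    using self_in_orbit chains_of_subset[OF assms] by auto
  with chains_of_total[OF assms xy(1,2)] show "orbit_le leq A B \<or> orbit_le leq B A"
    unfolding orbit_le_def by blast
qed

lemma chain_orbit_posetE:
  assumes "Q \<in> chain_orbit_poset G X leq act"
  obtains c where "c \<in> chains_of X leq" "c \<subseteq> X" "Q = chain_orbit G act c"
    "alpha G act Q = orbit G act ` c"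
proof -
  obtain c where c: "c \<in> chains_of X leq" "Q = chain_orbit G act c"
    using assms unfolding chain_orbit_poset_def by blast
  have "c \<subseteq> X"
    using c(1) by (rule chains_of_subset)
  show thesis
    by (rule that[OF c(1) \<open>c \<subseteq> X\<close> c(2)]) (simp add: c(2) alpha_chain_orbit \<open>c \<subseteq> X\<close>)
qed

lemma alpha_inj_on_if_property_B:
  assumes "finite (carrier G)" "property_B G X leq act"
  shows "inj_on (alpha G act) (chain_orbit_poset G X leq act)"
proof (rule inj_onI)
  fix Q1 Q2
  assume Q1: "Q1 \<in> chain_orbit_poset G X leq act" and Q2: "Q2 \<in> chain_orbit_poset G X leq act"
    and alpha_eq: "alpha G act Q1 = alpha G act Q2"
  obtain c where c: "c \<in> chains_of X leq" "c \<subseteq> X" "Q1 = chain_orbit G act c"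
      "alpha G act Q1 = orbit G act ` c"
    using Q1 by (rule chain_orbit_posetE)
  obtain d where d: "d \<in> chains_of X leq" "d \<subseteq> X" "Q2 = chain_orbit G act d"
      "alpha G act Q2 = orbit G act ` d"
    using Q2 by (rule chain_orbit_posetE)
  have same_orbits: "orbit G act ` c = orbit G act ` d"
    using alpha_eq c(4) d(4) by simp
  then obtain g where g: "g \<in> carrier G" "(\<lambda>x. act x g) ` c \<subseteq> d"
    by (rule property_B_transport[OF assms(2) c(1) d(1), OF equalityD1])
  have "orbit G act ` (\<lambda>x. act x g) ` c = orbit G act ` d"
    using orbit_image_act[OF c(2), of "\<lambda>_. g"] g(1) same_orbits by simp
  then have "(\<lambda>x. act x g) ` c = d"
    using inj_on_image_eq_iff[OF inj_on_orbit_chain[OF assms(1) d(1)] g(2) subset_refl] by simp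
  then show "Q1 = Q2"
    using chain_orbit_act[OF c(2) g(1)] c(3) d(3) by simp
qed

lemma property_B_if_alpha_inj_on:
  assumes "finite (carrier G)" "inj_on (alpha G act) (chain_orbit_poset G X leq act)"
  shows "property_B G X leq act"
  unfolding property_B_def
proof (intro allI impI)
  fix c f
  assume c: "c \<in> chains_of X leq" and f: "\<forall>v\<in>c. f v \<in> carrier G"
    and d: "(\<lambda>v. act v (f v)) ` c \<in> chains_of X leq"
  have cX: "c \<subseteq> X" using chains_of_subset[OF c] .
  have "alpha G act (chain_orbit G act ((\<lambda>v. act v (f v)) ` c)) = alpha G act (chain_orbit G act c)"
    using orbit_image_act[OF cX] f alpha_chain_orbit cX chains_of_subset[OF d] by simp
  then have "chain_orbit G act ((\<lambda>v. act v (f v)) ` c) = chain_orbit G act c"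
    using inj_onD[OF assms(2)] c d unfolding chain_orbit_poset_def by blast
  then have "(\<lambda>v. act v (f v)) ` c \<in> chain_orbit G act c"
    using self_in_chain_orbit[OF chains_of_subset[OF d]] by simp
  then obtain g where g: "g \<in> carrier G" "(\<lambda>v. act v (f v)) ` c = (\<lambda>x. act x g) ` c"
    unfolding chain_orbit_def by blast
  have "act v (f v) = act v g" if v: "v \<in> c" for v
  proof -
    obtain w where w: "w \<in> c" "act v (f v) = act w g"
      using g(2) v by blast
    have "orbit G act v = orbit G act w"
      using orbit_act[of v "f v"] orbit_act[of w g] w g(1) f v cX by auto
    then have "v = w"
      using inj_onD[OF inj_on_orbit_chain[OF assms(1) c]] v w(1) by blast
    with w(2) show ?thesis by simp
  qed
  with g(1) show "\<exists>g\<in>carrier G. \<forall>v\<in>c. act v (f v) = act v g" by blast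
qed

lemma alpha_image:
  assumes "finite X"
  shows "alpha G act ` chain_orbit_poset G X leq act = chains_of (orbit_poset G X act) (orbit_le leq)"
proof
  show "alpha G act ` chain_orbit_poset G X leq act \<subseteq> chains_of (orbit_poset G X act) (orbit_le leq)"
  proof
    fix S assume "S \<in> alpha G act ` chain_orbit_poset G X leq act"
    then obtain Q where Q: "Q \<in> chain_orbit_poset G X leq act" "S = alpha G act Q"
      by blast
    obtain c where c: "c \<in> chains_of X leq" "alpha G act Q = orbit G act ` c"
      using Q(1) by (rule chain_orbit_posetE)
    then show "S \<in> chains_of (orbit_poset G X act) (orbit_le leq)"
      using orbit_image_chain Q(2) by simp
  qed
  show "chains_of (orbit_poset G X act) (orbit_le leq) \<subseteq> alpha G act ` chain_orbit_poset G X leq act"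
  proof
    fix S assume "S \<in> chains_of (orbit_poset G X act) (orbit_le leq)"
    then obtain c where c: "c \<in> chains_of X leq" "orbit G act ` c = S"
      using lift_chain_of_orbits[OF assms] by blast
    then have "alpha G act (chain_orbit G act c) = S"
      using alpha_chain_orbit[OF chains_of_subset] by simp
    moreover have "chain_orbit G act c \<in> chain_orbit_poset G X leq act"
      unfolding chain_orbit_poset_def using c(1) by (rule imageI)
    ultimately show "S \<in> alpha G act ` chain_orbit_poset G X leq act"
      by blast
  qed
qed

lemma chain_orbit_le_iff_alpha_subset:
  assumes "property_B G X leq act"
    and "Q1 \<in> chain_orbit_poset G X leq act" "Q2 \<in> chain_orbit_poset G X leq act"
  shows "chain_orbit_le Q1 Q2 \<longleftrightarrow> alpha G act Q1 \<subseteq> alpha G act Q2"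
proof -
  obtain c1 where c1: "c1 \<in> chains_of X leq" "c1 \<subseteq> X" "Q1 = chain_orbit G act c1"
      "alpha G act Q1 = orbit G act ` c1"
    using assms(2) by (rule chain_orbit_posetE)
  obtain c2 where c2: "c2 \<in> chains_of X leq" "c2 \<subseteq> X" "Q2 = chain_orbit G act c2"
      "alpha G act Q2 = orbit G act ` c2"
    using assms(3) by (rule chain_orbit_posetE)
  show ?thesis
  proof
    assume "chain_orbit_le Q1 Q2"
    then obtain g1 g2 where g: "g1 \<in> carrier G" "g2 \<in> carrier G"
      "(\<lambda>x. act x g1) ` c1 \<subseteq> (\<lambda>x. act x g2) ` c2"
      unfolding chain_orbit_le_def c1(3) c2(3) chain_orbit_def by blast
    have "orbit G act ` (\<lambda>x. act x g1) ` c1 \<subseteq> orbit G act ` (\<lambda>x. act x g2) ` c2"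
      using g(3) by (rule image_mono)
    then show "alpha G act Q1 \<subseteq> alpha G act Q2"
      using orbit_image_act[OF c1(2), of "\<lambda>_. g1"] orbit_image_act[OF c2(2), of "\<lambda>_. g2"] g(1,2) c1(4) c2(4)
      by simp
  next
    assume "alpha G act Q1 \<subseteq> alpha G act Q2"
    then have "orbit G act ` c1 \<subseteq> orbit G act ` c2"
      using c1(4) c2(4) by simp
    then obtain g where "g \<in> carrier G" "(\<lambda>x. act x g) ` c1 \<subseteq> c2"
      by (rule property_B_transport[OF assms(1) c1(1) c2(1)])
    moreover have "c2 \<in> Q2"
      using self_in_chain_orbit[OF c2(2)] c2(3) by simp
    ultimately show "chain_orbit_le Q1 Q2"
      unfolding chain_orbit_le_def c1(3) chain_orbit_def by blast
  qed
qed

end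

theorem proposition2p9:
  assumes "finite_G_poset G X leq act"
  shows "(inj_on (alpha G act) (chain_orbit_poset G X leq act) \<longleftrightarrow> property_B G X leq act) \<and>
         (inj_on (alpha G act) (chain_orbit_poset G X leq act) \<longrightarrow>
            bij_betw (alpha G act) (chain_orbit_poset G X leq act)
                     (chains_of (orbit_poset G X act) (orbit_le leq)) \<and>
            (\<forall>Q1\<in>chain_orbit_poset G X leq act. \<forall>Q2\<in>chain_orbit_poset G X leq act.
               chain_orbit_le Q1 Q2 \<longleftrightarrow> alpha G act Q1 \<subseteq> alpha G act Q2))"
proof -
  interpret G_poset G X leq act
    using assms by (rule G_poset_if_finite_G_poset)
  have finite: "finite (carrier G)" "finite X"
    using assms unfolding finite_G_poset_def by blast+
  have inj_iff_B: "inj_on (alpha G act) (chain_orbit_poset G X leq act) \<longleftrightarrow> property_B G X leq act"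
    using alpha_inj_on_if_property_B property_B_if_alpha_inj_on finite(1) by blast
  show ?thesis
    using inj_iff_B alpha_image[OF finite(2)] chain_orbit_le_iff_alpha_subset
    unfolding bij_betw_def by blast
qed

end
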